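(* Let $G$ be an $X-Y$ normalized graph and let $K \neq N(X)$ be an important $X-Y$ separator of $G$. Then $K$ is a compound witness (w.r.t. $X,Y$ in $G$) of rank at most $excess(K)$.
   Context: $G$ is a finite undirected graph, $X,Y$ disjoint subsets of $V(G)$; $N(C)=(\bigcup_{v\in C}N(v))\setminus C$. An $X-Y$ separator is a set $K \subseteq V(G) \setminus (X \cup Y)$ such that $G \setminus K$ has no path from $X$ to $Y$; minimal means inclusion-minimal. A graph $H$ is $X-Y$ normalized if $N(X)$ is the only minimum-cardinality $X-Y$ separator of $H$. In $H$, let $r_H$ be the minimum size of an $X-Y$ separator; the excess of an $X-Y$ separator $K$ is $excess(K)=|K|-r_H$. $NR(H,Y,K)$ is the set of vertices not reachable from $Y$ in $H\setminus K$; $K \geq K'$ means $NR(H,Y,K)\supseteq NR(H,Y,K')$, $K'<K$ means $K\ge K'$ and the $NR$ sets differ. A minimal $X-Y$ separator $K$ is important if there is no $X-Y$ separator $K'$ with $K<K'$ and $|K|\ge |K'|$. For $S\subseteq N(X)$ with no vertex adjacent to $Y$, the cover excess $CE(S)$ is the excess of a smallest $X-Y$ separator disjoint from $S$; a witness of $S$ is an $X-Y$ separator disjoint from $S$ with excess $CE(S)$; in a normalized graph there is a unique witness of $S$ that is an important $X-Y$ separator, denoted $K(S)$. $Pr(H,X,Y,K)$ is the graph obtained from $H\setminus (NR(H,Y,K)\setminus X)$ by making $X$ adjacent to all vertices of $K$. Compound witness: for an $X-Y$ normalized graph $H$, a sequence $(S_1,\dots,S_r)$ of pairwise disjoint non-empty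 vertex sets and an $X-Y$ separator $K$, $K$ is a compound witness of the attribute $(S_1,\dots,S_r)$ w.r.t. $X,Y$ in $H$ if: when $r=1$, $S_1\subseteq N(X)$ and $K=K(S_1)$; when $r>1$, $K(S_1)$ is defined (i.e. $S_1\subseteq N(X)$, not adjacent to $Y$), $S_2\cup\dots\cup S_r$ is disjoint from $N(X)$, and $K$ is a compound witness of $(S_2,\dots,S_r)$ w.r.t. $X,Y$ in $Pr(H,X,Y,K(S_1))$. The rank of such a compound witness is $|S_1|+\dots+|S_r|$. *)

theory Defs
  imports Main
begin

type_synonym 'a graph = "'a set \<times> ('a \<times> 'a) set"

definition verts :: "'a graph \<Rightarrow> 'a set" where "verts G = fst G"
definition edges :: "'a graph \<Rightarrow> ('a \<times> 'a) set" where "edges G = snd G"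

definition wf_graph :: "'a graph \<Rightarrow> bool" where
  "wf_graph G \<longleftrightarrow> finite (verts G) \<and> edges G \<subseteq> verts G \<times> verts G
     \<and> sym (edges G) \<and> irrefl (edges G)"

definition nbh :: "'a graph \<Rightarrow> 'a set \<Rightarrow> 'a set" where
  "nbh G C = {u \<in> verts G. \<exists>v\<in>C. (v, u) \<in> edges G} - C"

definition path_avoid :: "'a graph \<Rightarrow> 'a set \<Rightarrow> 'a \<Rightarrow> 'a \<Rightarrow> bool" where
  "path_avoid G K a b \<longleftrightarrow> a \<in> verts G - K \<and>
     (a, b) \<in> (edges G \<inter> ((verts G - K) \<times> (verts G - K)))\<^sup>*"

definition separator :: "'a graph \<Rightarrow> 'a set \<Rightarrow> 'a set \<Rightarrow> 'a set \<Rightarrow> bool" where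
  "separator G X Y K \<longleftrightarrow> K \<subseteq> verts G - (X \<union> Y) \<and>
     \<not> (\<exists>x\<in>X. \<exists>y\<in>Y. path_avoid G K x y)"

definition min_separator :: "'a graph \<Rightarrow> 'a set \<Rightarrow> 'a set \<Rightarrow> 'a set \<Rightarrow> bool" where
  "min_separator G X Y K \<longleftrightarrow> separator G X Y K \<and>
     (\<forall>K'. K' \<subset> K \<longrightarrow> \<not> separator G X Y K')"

definition sep_num :: "'a graph \<Rightarrow> 'a set \<Rightarrow> 'a set \<Rightarrow> nat" where
  "sep_num G X Y = (LEAST n. \<exists>K. separator G X Y K \<and> card K = n)"

definition excess :: "'a graph \<Rightarrow> 'a set \<Rightarrow> 'a set \<Rightarrow> 'a set \<Rightarrow> nat" where
  "excess G X Y K = card K - sep_num G X Y"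

definition normalized :: "'a graph \<Rightarrow> 'a set \<Rightarrow> 'a set \<Rightarrow> bool" where
  "normalized G X Y \<longleftrightarrow> separator G X Y (nbh G X) \<and>
     card (nbh G X) = sep_num G X Y \<and>
     (\<forall>K. separator G X Y K \<and> card K = sep_num G X Y \<longrightarrow> K = nbh G X)"

definition NR :: "'a graph \<Rightarrow> 'a set \<Rightarrow> 'a set \<Rightarrow> 'a set" where
  "NR G Y K = {v \<in> verts G - K. \<not> (\<exists>y\<in>Y. path_avoid G K y v)}"

definition sep_ge :: "'a graph \<Rightarrow> 'a set \<Rightarrow> 'a set \<Rightarrow> 'a set \<Rightarrow> bool" where
  "sep_ge G Y K K' \<longleftrightarrow> NR G Y K' \<subseteq> NR G Y K"

definition sep_less :: "'a graph \<Rightarrow> 'a set \<Rightarrow> 'a set \<Rightarrow> 'a set \<Rightarrow> bool" where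
  "sep_less G Y K' K \<longleftrightarrow> sep_ge G Y K K' \<and> NR G Y K \<noteq> NR G Y K'"

definition important :: "'a graph \<Rightarrow> 'a set \<Rightarrow> 'a set \<Rightarrow> 'a set \<Rightarrow> bool" where
  "important G X Y K \<longleftrightarrow> min_separator G X Y K \<and>
     \<not> (\<exists>K'. separator G X Y K' \<and> sep_less G Y K K' \<and> card K \<ge> card K')"

definition admissible :: "'a graph \<Rightarrow> 'a set \<Rightarrow> 'a set \<Rightarrow> 'a set \<Rightarrow> bool" where
  "admissible G X Y S \<longleftrightarrow> S \<subseteq> nbh G X \<and> (\<forall>s\<in>S. \<forall>y\<in>Y. (s, y) \<notin> edges G)"

definition cover_excess :: "'a graph \<Rightarrow> 'a set \<Rightarrow> 'a set \<Rightarrow> 'a set \<Rightarrow> nat" where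
  "cover_excess G X Y S =
     (LEAST n. \<exists>K. separator G X Y K \<and> K \<inter> S = {} \<and> excess G X Y K = n)"

definition witness :: "'a graph \<Rightarrow> 'a set \<Rightarrow> 'a set \<Rightarrow> 'a set \<Rightarrow> 'a set \<Rightarrow> bool" where
  "witness G X Y S K \<longleftrightarrow> separator G X Y K \<and> K \<inter> S = {} \<and>
     excess G X Y K = cover_excess G X Y S"

text \<open>K(S): the unique witness of S that is an important separator.\<close>
definition KW :: "'a graph \<Rightarrow> 'a set \<Rightarrow> 'a set \<Rightarrow> 'a set \<Rightarrow> 'a set" where
  "KW G X Y S = (THE K. witness G X Y S K \<and> important G X Y K)"

definition Pr :: "'a graph \<Rightarrow> 'a set \<Rightarrow> 'a set \<Rightarrow> 'a set \<Rightarrow> 'a graph" where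
  "Pr G X Y K =
     (let W = verts G - (NR G Y K - X)
      in (W, (edges G \<inter> (W \<times> W)) \<union> (X \<times> K) \<union> (K \<times> X)))"

fun cw :: "'a graph \<Rightarrow> 'a set \<Rightarrow> 'a set \<Rightarrow> 'a set list \<Rightarrow> 'a set \<Rightarrow> bool" where
  "cw G X Y [] K = False"
| "cw G X Y [S] K \<longleftrightarrow> normalized G X Y \<and> admissible G X Y S \<and> K = KW G X Y S"
| "cw G X Y (S # S' # Ss) K \<longleftrightarrow> normalized G X Y \<and> admissible G X Y S \<and>
     \<Union> (set (S' # Ss)) \<inter> nbh G X = {} \<and>
     cw (Pr G X Y (KW G X Y S)) X Y (S' # Ss) K"

definition compound_witness :: "'a graph \<Rightarrow> 'a set \<Rightarrow> 'a set \<Rightarrow> 'a set list \<Rightarrow> 'a set \<Rightarrow> bool" where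
  "compound_witness G X Y Ss K \<longleftrightarrow>
     (\<forall>i<length Ss. Ss ! i \<noteq> {}) \<and>
     (\<forall>i<length Ss. \<forall>j<length Ss. i \<noteq> j \<longrightarrow> Ss ! i \<inter> Ss ! j = {}) \<and>
     cw G X Y Ss K"

definition cw_rank :: "'a set list \<Rightarrow> nat" where
  "cw_rank Ss = sum_list (map card Ss)"

end

theory Submission
  imports Defs
begin

text \<open>The cover excess CE is submodular on admissible sets, because the boundaries of the union
  and of the intersection of the unreachable regions of two witnesses are again separators and
  the neighbourhood size is submodular. By the same uncrossing, the unreachable region of every
  witness of S lies inside that of any important separator whose region contains S.

  Given an important K \<noteq> N(X), pick T \<subseteq> N(X) - K minimal with CE(T) = CE(N(X) - K).
  Every vertex of T is then needed, and submodularity gives |T| \<le> CE(T). The important witness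
  K(T) lies below K, and in the projection Pr(G, X, Y, K(T)) the separator K stays important
  while the minimum separator size grows to |K(T)|, so the excess of K drops by CE(T) \<ge> 1.
  Induction on the excess yields a compound witness of K in the projection, and prefixing T
  gives one in G of rank at most |T| plus the excess in the projection.\<close>

lemma rtrancl_closed:
  assumes "(a, b) \<in> R\<^sup>*" "a \<in> Q"
    and "\<And>u w. (a, u) \<in> R\<^sup>* \<Longrightarrow> (u, w) \<in> R \<Longrightarrow> u \<in> Q \<Longrightarrow> w \<in> Q"
  shows "b \<in> Q"
  using assms(1)
proof (induction rule: rtrancl_induct)
  case base then show ?case using assms(2) by simp
next
  case (step u w) then show ?case using assms(3) by blast
qed

lemma nonempty_nth_iff: "(\<forall>i<length As. As ! i \<noteq> {}) \<longleftrightarrow> {} \<notin> set As"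
  by (auto simp: in_set_conv_nth)

lemma disjoint_nth_Cons:
  assumes "\<forall>B\<in>set As. A \<inter> B = {}"
    and "\<forall>i<length As. \<forall>j<length As. i \<noteq> j \<longrightarrow> As ! i \<inter> As ! j = {}"
  shows "\<forall>i<length (A # As). \<forall>j<length (A # As). i \<noteq> j \<longrightarrow> (A # As) ! i \<inter> (A # As) ! j = {}"
proof (intro allI impI)
  fix i j assume ij: "i < length (A # As)" "j < length (A # As)" "i \<noteq> j"
  show "(A # As) ! i \<inter> (A # As) ! j = {}"
  proof (cases i; cases j)
    fix j' assume "i = 0" "j = Suc j'"
    then show ?thesis using ij assms(1) nth_mem[of j' As] by auto
  next
    fix i' assume "i = Suc i'" "j = 0"
    then show ?thesis using ij assms(1) nth_mem[of i' As] by auto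
  next
    fix i' j' assume "i = Suc i'" "j = Suc j'"
    then show ?thesis using ij assms(2) by auto
  qed (use ij in simp)
qed

section \<open>Reachability and separators\<close>

locale sep_graph =
  fixes G :: "'a graph" and X Y :: "'a set"
  assumes wf: "wf_graph G" and X_verts: "X \<subseteq> verts G" and Y_verts: "Y \<subseteq> verts G"
    and X_Y_disjoint: "X \<inter> Y = {}"
begin

lemma finite_verts: "finite (verts G)"
  using wf by (simp add: wf_graph_def)

lemma edge_verts: "(u, v) \<in> edges G \<Longrightarrow> u \<in> verts G \<and> v \<in> verts G"
  using wf by (auto simp: wf_graph_def)

lemma edge_sym: "(u, v) \<in> edges G \<Longrightarrow> (v, u) \<in> edges G"
  using wf by (auto simp: wf_graph_def sym_def)

lemma path_avoid_target: "path_avoid G K a b \<Longrightarrow> b \<in> verts G - K"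
  unfolding path_avoid_def by (erule conjE, erule rtrancl_closed) auto

lemma path_avoid_sym: "path_avoid G K a b \<Longrightarrow> path_avoid G K b a"
proof -
  assume ab: "path_avoid G K a b"
  have "sym (edges G \<inter> ((verts G - K) \<times> (verts G - K)))"
    by (auto simp: sym_def edge_sym)
  then have "(b, a) \<in> (edges G \<inter> ((verts G - K) \<times> (verts G - K)))\<^sup>*"
    using ab sym_rtrancl unfolding path_avoid_def by (auto dest: symD)
  then show ?thesis using path_avoid_target[OF ab] unfolding path_avoid_def by simp
qed

lemma path_avoid_refl: "a \<in> verts G - K \<Longrightarrow> path_avoid G K a a"
  by (simp add: path_avoid_def)

lemma path_avoid_step:
  "path_avoid G K a b \<Longrightarrow> (b, c) \<in> edges G \<Longrightarrow> c \<notin> K \<Longrightarrow> path_avoid G K a c"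
  using path_avoid_target[of K a b] edge_verts[of b c] unfolding path_avoid_def
  by (auto intro: rtrancl_into_rtrancl)

lemma path_avoid_edge:
  "a \<in> verts G - K \<Longrightarrow> (a, c) \<in> edges G \<Longrightarrow> c \<notin> K \<Longrightarrow> path_avoid G K a c"
  using path_avoid_step path_avoid_refl by blast

lemma path_avoid_closed:
  assumes "path_avoid G K a b" "a \<in> Q"
    and "\<And>u w. path_avoid G K a u \<Longrightarrow> (u, w) \<in> edges G \<Longrightarrow> u \<notin> K \<Longrightarrow> w \<notin> K
           \<Longrightarrow> w \<in> verts G \<Longrightarrow> u \<in> Q \<Longrightarrow> w \<in> Q"
  shows "b \<in> Q"
proof -
  have a: "a \<in> verts G - K"
    and ab: "(a, b) \<in> (edges G \<inter> ((verts G - K) \<times> (verts G - K)))\<^sup>*"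
    using assms(1) unfolding path_avoid_def by auto
  show ?thesis
    using ab assms(2)
  proof (rule rtrancl_closed)
    fix u w assume "(a, u) \<in> (edges G \<inter> ((verts G - K) \<times> (verts G - K)))\<^sup>*"
      "(u, w) \<in> edges G \<inter> (verts G - K) \<times> (verts G - K)" "u \<in> Q"
    then show "w \<in> Q" using assms(3)[of u w] a unfolding path_avoid_def by auto
  qed
qed

lemma nbh_subset_verts: "nbh G A \<subseteq> verts G"
  by (auto simp: nbh_def)

lemma nbh_disjoint: "nbh G A \<inter> A = {}"
  by (auto simp: nbh_def)

lemma nbh_memI: "(v, u) \<in> edges G \<Longrightarrow> v \<in> A \<Longrightarrow> u \<notin> A \<Longrightarrow> u \<in> nbh G A"
  using edge_verts by (auto simp: nbh_def)

lemma nbh_memD: "u \<in> nbh G A \<Longrightarrow> \<exists>v\<in>A. (v, u) \<in> edges G \<and> u \<in> verts G \<and> u \<notin> A"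
  by (auto simp: nbh_def)

lemma card_nbh_submodular:
  "card (nbh G (A \<union> B)) + card (nbh G (A \<inter> B)) \<le> card (nbh G A) + card (nbh G B)"
proof -
  let ?P = "nbh G (A \<union> B)" and ?Q = "nbh G (A \<inter> B)"
  have fin: "finite (nbh G C)" for C
    using finite_subset[OF nbh_subset_verts finite_verts] .
  have Un: "?P \<union> ?Q \<subseteq> nbh G A \<union> nbh G B" and Int: "?P \<inter> ?Q \<subseteq> nbh G A \<inter> nbh G B"
    by (auto simp: nbh_def)
  have "card ?P + card ?Q = card (?P \<union> ?Q) + card (?P \<inter> ?Q)"
    using card_Un_Int[OF fin fin] by simp
  also have "\<dots> \<le> card (nbh G A \<union> nbh G B) + card (nbh G A \<inter> nbh G B)"
    using card_mono[OF _ Un] card_mono[OF _ Int] fin by (meson add_mono finite_Int finite_UnI)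
  also have "\<dots> = card (nbh G A) + card (nbh G B)"
    using card_Un_Int[OF fin fin] by simp
  finally show ?thesis .
qed

lemma separator_nbh:
  assumes "X \<subseteq> A" "A \<inter> Y = {}" "nbh G A \<inter> Y = {}"
  shows "separator G X Y (nbh G A)"
  unfolding separator_def
proof (intro conjI notI)
  show "nbh G A \<subseteq> verts G - (X \<union> Y)" using nbh_subset_verts nbh_disjoint assms by blast
next
  assume "\<exists>x\<in>X. \<exists>y\<in>Y. path_avoid G (nbh G A) x y"
  then obtain x y where xy: "x \<in> X" "y \<in> Y" "path_avoid G (nbh G A) x y" by blast
  have "y \<in> A" using xy(3)
  proof (rule path_avoid_closed)
    show "x \<in> A" using xy assms by auto
  next
    fix u w assume "(u, w) \<in> edges G" "w \<notin> nbh G A" "u \<in> A"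
    then show "w \<in> A" using nbh_memI by blast
  qed
  then show False using xy assms by blast
qed

lemma separatorD: "separator G X Y K \<Longrightarrow> K \<subseteq> verts G \<and> K \<inter> X = {} \<and> K \<inter> Y = {}"
  by (auto simp: separator_def)

lemma finite_separator: "separator G X Y K \<Longrightarrow> finite K"
  by (metis separatorD finite_subset finite_verts)

lemma X_subset_NR: "separator G X Y K \<Longrightarrow> X \<subseteq> NR G Y K"
proof
  fix x assume K: "separator G X Y K" and x: "x \<in> X"
  have "\<not> path_avoid G K y x" if "y \<in> Y" for y
    using K x that path_avoid_sym unfolding separator_def by blast
  moreover have "x \<in> verts G - K" using K x X_verts separatorD by blast
  ultimately show "x \<in> NR G Y K" unfolding NR_def by blast
qed

lemma NR_disjoint_Y: "NR G Y K \<inter> Y = {}"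
  using path_avoid_refl unfolding NR_def by blast

lemma NR_disjoint: "NR G Y K \<inter> K = {}"
  and NR_subset_verts: "NR G Y K \<subseteq> verts G"
  unfolding NR_def by auto

lemma nbh_NR_subset: "nbh G (NR G Y K) \<subseteq> K"
proof
  fix u assume "u \<in> nbh G (NR G Y K)"
  then obtain v where v: "v \<in> NR G Y K" "(v, u) \<in> edges G" "u \<in> verts G" "u \<notin> NR G Y K"
    using nbh_memD by blast
  show "u \<in> K"
  proof (rule ccontr)
    assume "u \<notin> K"
    then obtain y where "y \<in> Y" "path_avoid G K y u" using v unfolding NR_def by auto
    then have "path_avoid G K y v" using path_avoid_step edge_sym v unfolding NR_def by blast
    then show False using v \<open>y \<in> Y\<close> unfolding NR_def by auto
  qed
qed

lemma separator_nbh_NR_Un: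
  assumes "separator G X Y K1" "separator G X Y K2"
  shows "separator G X Y (nbh G (NR G Y K1 \<union> NR G Y K2))"
proof (rule separator_nbh)
  show "X \<subseteq> NR G Y K1 \<union> NR G Y K2" using X_subset_NR[OF assms(1)] by blast
  show "(NR G Y K1 \<union> NR G Y K2) \<inter> Y = {}" using NR_disjoint_Y by blast
  have "nbh G (NR G Y K1 \<union> NR G Y K2) \<subseteq> K1 \<union> K2"
    using nbh_NR_subset[of K1] nbh_NR_subset[of K2] by (auto simp: nbh_def)
  then show "nbh G (NR G Y K1 \<union> NR G Y K2) \<inter> Y = {}"
    using separatorD[OF assms(1)] separatorD[OF assms(2)] by blast
qed

lemma separator_nbh_NR_Int:
  assumes "separator G X Y K1" "separator G X Y K2"
  shows "separator G X Y (nbh G (NR G Y K1 \<inter> NR G Y K2))"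
proof (rule separator_nbh)
  show "X \<subseteq> NR G Y K1 \<inter> NR G Y K2"
    using X_subset_NR[OF assms(1)] X_subset_NR[OF assms(2)] by blast
  show "(NR G Y K1 \<inter> NR G Y K2) \<inter> Y = {}" using NR_disjoint_Y by blast
  have "nbh G (NR G Y K1 \<inter> NR G Y K2) \<subseteq> K1 \<union> K2"
    using nbh_NR_subset[of K1] nbh_NR_subset[of K2] by (auto simp: nbh_def)
  then show "nbh G (NR G Y K1 \<inter> NR G Y K2) \<inter> Y = {}"
    using separatorD[OF assms(1)] separatorD[OF assms(2)] by blast
qed

lemma card_nbh_NR_le: "separator G X Y K \<Longrightarrow> card (nbh G (NR G Y K)) \<le> card K"
  using card_mono[OF finite_separator nbh_NR_subset] by blast

lemma subset_NR_nbh: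
  assumes "A \<inter> Y = {}" "A \<subseteq> verts G"
  shows "A \<subseteq> NR G Y (nbh G A)"
proof
  fix v assume vA: "v \<in> A"
  have "\<not> path_avoid G (nbh G A) y v" if "y \<in> Y" for y
  proof
    assume yv: "path_avoid G (nbh G A) y v"
    have "v \<in> verts G - A" using yv
    proof (rule path_avoid_closed)
      show "y \<in> verts G - A" using that assms Y_verts by auto
    next
      fix u w assume "(u, w) \<in> edges G" "u \<notin> nbh G A" "w \<in> verts G" "u \<in> verts G - A"
      then show "w \<in> verts G - A" using nbh_memI[of w u A] edge_sym by blast
    qed
    then show False using vA by blast
  qed
  then show "v \<in> NR G Y (nbh G A)"
    using vA assms nbh_disjoint unfolding NR_def by blast
qed

lemma min_separator_eq_nbh_NR: "min_separator G X Y K \<Longrightarrow> K = nbh G (NR G Y K)"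
proof -
  assume min: "min_separator G X Y K"
  then have K: "separator G X Y K" unfolding min_separator_def by blast
  have "nbh G (NR G Y K) \<inter> Y = {}" using nbh_NR_subset separatorD[OF K] by blast
  then have "separator G X Y (nbh G (NR G Y K))"
    using separator_nbh[OF X_subset_NR[OF K] NR_disjoint_Y] by blast
  then show ?thesis
    using min nbh_NR_subset[of K] unfolding min_separator_def by blast
qed

lemma nbh_diff_subset_NR: "separator G X Y K \<Longrightarrow> nbh G X - K \<subseteq> NR G Y K"
proof
  fix s assume K: "separator G X Y K" and s: "s \<in> nbh G X - K"
  then obtain x where x: "x \<in> X" "(x, s) \<in> edges G" "s \<in> verts G" using nbh_memD by blast
  have "\<not> path_avoid G K y s" if "y \<in> Y" for y
  proof
    assume "path_avoid G K y s"
    then have "path_avoid G K y x"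
      using path_avoid_step x edge_sym separatorD[OF K] by blast
    then show False using K x that path_avoid_sym unfolding separator_def by blast
  qed
  then show "s \<in> NR G Y K" using s x unfolding NR_def by blast
qed

end

section \<open>Cover excess in normalized graphs\<close>

locale norm_graph = sep_graph +
  assumes normalized: "normalized G X Y"
begin

lemma separator_nbh_X: "separator G X Y (nbh G X)"
  and card_nbh_X: "card (nbh G X) = sep_num G X Y"
  and min_card_separator_eq_nbh_X:
    "separator G X Y K \<Longrightarrow> card K = sep_num G X Y \<Longrightarrow> K = nbh G X"
  using normalized unfolding normalized_def by blast+

lemma sep_num_le_card: "separator G X Y K \<Longrightarrow> sep_num G X Y \<le> card K"
  unfolding sep_num_def by (rule Least_le) (rule exI[of _ K], simp)

lemma no_edge_X_Y: "x \<in> X \<Longrightarrow> y \<in> Y \<Longrightarrow> (x, y) \<notin> edges G"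
  using nbh_memI[of x y X] X_Y_disjoint separatorD[OF separator_nbh_X] by blast

lemma admissible_subset: "admissible G X Y T \<Longrightarrow> S \<subseteq> T \<Longrightarrow> admissible G X Y S"
  unfolding admissible_def by blast

lemma finite_admissible: "admissible G X Y S \<Longrightarrow> finite S"
  unfolding admissible_def by (meson finite_subset nbh_subset_verts finite_verts)

lemma admissible_nbh_diff_separator:
  assumes K: "separator G X Y K"
  shows "admissible G X Y (nbh G X - K)"
  unfolding admissible_def
proof (intro conjI ballI notI)
  fix s y assume sy: "s \<in> nbh G X - K" "y \<in> Y" "(s, y) \<in> edges G"
  then have "y \<in> nbh G (NR G Y K)"
    using nbh_memI nbh_diff_subset_NR[OF K] NR_disjoint_Y by blast
  then show False using nbh_NR_subset separatorD[OF K] sy(2) by blast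
qed blast

lemma admissible_separator:
  assumes "admissible G X Y S"
  shows "separator G X Y (nbh G (X \<union> S)) \<and> nbh G (X \<union> S) \<inter> S = {}"
proof -
  have S: "S \<subseteq> nbh G X" and no_edge: "\<forall>s\<in>S. \<forall>y\<in>Y. (s, y) \<notin> edges G"
    using assms unfolding admissible_def by auto
  have "(X \<union> S) \<inter> Y = {}" using S separatorD[OF separator_nbh_X] X_Y_disjoint by blast
  moreover have "nbh G (X \<union> S) \<inter> Y = {}"
    using nbh_memD no_edge_X_Y no_edge by fastforce
  ultimately show ?thesis using separator_nbh nbh_disjoint by blast
qed

lemma cover_excess_le:
  assumes "separator G X Y K" "K \<inter> S = {}"
  shows "sep_num G X Y + cover_excess G X Y S \<le> card K"
proof -
  have "cover_excess G X Y S \<le> excess G X Y K"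
    unfolding cover_excess_def by (rule Least_le) (use assms in blast)
  then show ?thesis using sep_num_le_card[OF assms(1)] unfolding excess_def by linarith
qed

lemma witness_iff:
  "witness G X Y S K \<longleftrightarrow>
     separator G X Y K \<and> K \<inter> S = {} \<and> card K = sep_num G X Y + cover_excess G X Y S"
  using sep_num_le_card unfolding witness_def excess_def by force

lemma witness_exists:
  assumes "admissible G X Y S"
  obtains K where "witness G X Y S K"
proof -
  let ?P = "\<lambda>n. \<exists>K. separator G X Y K \<and> K \<inter> S = {} \<and> excess G X Y K = n"
  have "?P (excess G X Y (nbh G (X \<union> S)))" using admissible_separator[OF assms] by blast
  then have "?P (Least ?P)" by (rule LeastI)
  then show ?thesis using that unfolding cover_excess_def witness_def by blast
qed

lemma cover_excess_empty: "cover_excess G X Y {} = 0"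
  using cover_excess_le[OF separator_nbh_X, of "{}"] card_nbh_X by simp

lemma cover_excess_pos:
  assumes "admissible G X Y S" "S \<noteq> {}"
  shows "0 < cover_excess G X Y S"
proof (rule ccontr)
  assume "\<not> 0 < cover_excess G X Y S"
  moreover obtain K where "witness G X Y S K" using witness_exists[OF assms(1)] .
  ultimately have "K = nbh G X" "K \<inter> S = {}"
    using min_card_separator_eq_nbh_X unfolding witness_iff by auto
  then show False using assms unfolding admissible_def by blast
qed

lemma cover_excess_mono:
  assumes "admissible G X Y T" "S \<subseteq> T"
  shows "cover_excess G X Y S \<le> cover_excess G X Y T"
proof -
  obtain K where "witness G X Y T K" using witness_exists[OF assms(1)] .
  then show ?thesis using cover_excess_le[of K S] assms(2) unfolding witness_iff by auto
qed

lemma admissible_subset_NR: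
  "admissible G X Y S \<Longrightarrow> separator G X Y K \<Longrightarrow> K \<inter> S = {} \<Longrightarrow> S \<subseteq> NR G Y K"
  using nbh_diff_subset_NR unfolding admissible_def by blast

lemma cover_excess_submodular:
  assumes S: "admissible G X Y S" and T: "admissible G X Y T"
  shows "cover_excess G X Y (S \<union> T) + cover_excess G X Y (S \<inter> T)
         \<le> cover_excess G X Y S + cover_excess G X Y T"
proof -
  obtain K1 K2 where "witness G X Y S K1" "witness G X Y T K2"
    using witness_exists[OF S] witness_exists[OF T] by metis
  then have K1: "separator G X Y K1" "K1 \<inter> S = {}"
      "card K1 = sep_num G X Y + cover_excess G X Y S"
    and K2: "separator G X Y K2" "K2 \<inter> T = {}"
      "card K2 = sep_num G X Y + cover_excess G X Y T"
    unfolding witness_iff by auto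
  let ?A = "NR G Y K1 \<union> NR G Y K2" and ?B = "NR G Y K1 \<inter> NR G Y K2"
  have "S \<subseteq> NR G Y K1" "T \<subseteq> NR G Y K2"
    using admissible_subset_NR S T K1 K2 by auto
  then have "nbh G ?A \<inter> (S \<union> T) = {}" "nbh G ?B \<inter> (S \<inter> T) = {}"
    using nbh_disjoint[of ?A] nbh_disjoint[of ?B] by blast+
  then have "sep_num G X Y + cover_excess G X Y (S \<union> T) \<le> card (nbh G ?A)"
    "sep_num G X Y + cover_excess G X Y (S \<inter> T) \<le> card (nbh G ?B)"
    using cover_excess_le separator_nbh_NR_Un[OF K1(1) K2(1)]
      separator_nbh_NR_Int[OF K1(1) K2(1)] by blast+
  moreover have "card (nbh G ?A) + card (nbh G ?B) \<le> card K1 + card K2"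
    using card_nbh_submodular[of "NR G Y K1" "NR G Y K2"]
      card_nbh_NR_le[OF K1(1)] card_nbh_NR_le[OF K2(1)] by linarith
  ultimately show ?thesis using K1(3) K2(3) by linarith
qed

text \<open>Uncrossing: if the union of the unreachable regions of K' and K were strictly larger than
  that of K, its boundary would be a separator beyond K of size at most card K.\<close>

lemma witness_NR_subset_important:
  assumes S: "admissible G X Y S" and wit: "witness G X Y S K'"
    and imp: "important G X Y K" and S_NR: "S \<subseteq> NR G Y K"
  shows "NR G Y K' \<subseteq> NR G Y K"
proof -
  have K: "separator G X Y K" using imp unfolding important_def min_separator_def by blast
  have K': "separator G X Y K'" "K' \<inter> S = {}" "card K' = sep_num G X Y + cover_excess G X Y S"
    using wit unfolding witness_iff by auto
  let ?A = "NR G Y K \<union> NR G Y K'" and ?B = "NR G Y K \<inter> NR G Y K'"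
  have "nbh G ?B \<inter> S = {}"
    using nbh_disjoint[of ?B] admissible_subset_NR[OF S K'(1,2)] S_NR by blast
  then have "card K' \<le> card (nbh G ?B)"
    using cover_excess_le[OF separator_nbh_NR_Int[OF K K'(1)]] K'(3) by simp
  then have card_A: "card (nbh G ?A) \<le> card K"
    using card_nbh_submodular[of "NR G Y K" "NR G Y K'"]
      card_nbh_NR_le[OF K] card_nbh_NR_le[OF K'(1)] by linarith
  have A_NR: "?A \<subseteq> NR G Y (nbh G ?A)"
    using subset_NR_nbh NR_disjoint_Y NR_subset_verts by (metis Int_Un_distrib2 Un_empty Un_subset_iff)
  have "\<not> sep_less G Y K (nbh G ?A)"
    using imp separator_nbh_NR_Un[OF K K'(1)] card_A unfolding important_def by blast
  then have "NR G Y (nbh G ?A) = NR G Y K"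
    using A_NR unfolding sep_less_def sep_ge_def by blast
  then show ?thesis using A_NR by blast
qed

lemma important_witness_exists:
  assumes S: "admissible G X Y S"
  obtains K where "witness G X Y S K" "important G X Y K"
proof -
  obtain K1 where "witness G X Y S K1" using witness_exists[OF S] .
  moreover have "card (NR G Y K) < Suc (card (verts G))" for K
    using card_mono[OF finite_verts NR_subset_verts[of K]] by simp
  ultimately obtain K where wit: "witness G X Y S K"
    and max: "\<And>K'. witness G X Y S K' \<Longrightarrow> card (NR G Y K') \<le> card (NR G Y K)"
    using Lattices_Big.ex_has_greatest_nat[of "witness G X Y S" K1 "\<lambda>K. card (NR G Y K)"] by blast
  have K: "separator G X Y K" "K \<inter> S = {}" "card K = sep_num G X Y + cover_excess G X Y S"
    using wit unfolding witness_iff by auto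
  have "min_separator G X Y K"
    unfolding min_separator_def
  proof (intro conjI allI impI notI)
    fix K' assume K': "K' \<subset> K" "separator G X Y K'"
    then have "card K' < card K" using psubset_card_mono finite_separator[OF K(1)] by blast
    moreover have "card K \<le> card K'" using cover_excess_le[OF K'(2)] K' K by auto
    ultimately show False by simp
  qed (rule K(1))
  moreover have "\<not> sep_less G Y K K'" if K': "separator G X Y K'" "card K' \<le> card K" for K'
  proof
    assume "sep_less G Y K K'"
    then have NR: "NR G Y K \<subset> NR G Y K'" unfolding sep_less_def sep_ge_def by blast
    then have "K' \<inter> S = {}"
      using admissible_subset_NR[OF S K(1,2)] NR_disjoint[of K'] by blast
    then have "witness G X Y S K'"
      using cover_excess_le[OF K'(1) \<open>K' \<inter> S = {}\<close>] K' K unfolding witness_iff by auto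
    then have "card (NR G Y K') \<le> card (NR G Y K)" by (rule max)
    moreover have "card (NR G Y K) < card (NR G Y K')"
      using NR psubset_card_mono finite_subset[OF NR_subset_verts finite_verts] by blast
    ultimately show False by simp
  qed
  ultimately have "important G X Y K" unfolding important_def by blast
  then show ?thesis using that wit by blast
qed

lemma important_witness_unique:
  assumes S: "admissible G X Y S"
    and K: "witness G X Y S K" "important G X Y K"
    and K': "witness G X Y S K'" "important G X Y K'"
  shows "K = K'"
proof -
  have "S \<subseteq> NR G Y K" "S \<subseteq> NR G Y K'"
    using admissible_subset_NR[OF S] K(1) K'(1) unfolding witness_def by auto
  then have "NR G Y K = NR G Y K'"
    using witness_NR_subset_important S K K' by (metis subset_antisym)
  then show ?thesis
    using min_separator_eq_nbh_NR K(2) K'(2) unfolding important_def by metis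
qed

lemma KW_witness_important:
  assumes S: "admissible G X Y S"
  shows "witness G X Y S (KW G X Y S)" "important G X Y (KW G X Y S)"
proof -
  obtain K where "witness G X Y S K" "important G X Y K"
    using important_witness_exists[OF S] .
  then have "\<exists>!K. witness G X Y S K \<and> important G X Y K"
    using important_witness_unique[OF S] by blast
  then show "witness G X Y S (KW G X Y S)" "important G X Y (KW G X Y S)"
    unfolding KW_def by (metis (no_types, lifting) theI')+
qed

text \<open>If every vertex of T is needed for its cover excess, submodularity shows that each
  vertex added to a subset of T raises the cover excess by at least one.\<close>

lemma card_le_cover_excess_if_critical:
  assumes T: "admissible G X Y T"
    and critical: "\<forall>t\<in>T. cover_excess G X Y (T - {t}) < cover_excess G X Y T"
  shows "card T \<le> cover_excess G X Y T"
proof -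
  have "finite T" using finite_admissible[OF T] .
  have "card U \<le> cover_excess G X Y U" if "U \<subseteq> T" for U
  proof -
    have "finite U" using \<open>finite T\<close> that finite_subset by blast
    then show ?thesis using that
    proof (induction U rule: finite_induct)
      case empty then show ?case by simp
    next
      case (insert a F)
      have "insert a F \<union> (T - {a}) = T" "insert a F \<inter> (T - {a}) = F"
        using insert.prems insert.hyps(2) by auto
      then have "cover_excess G X Y T + cover_excess G X Y F
          \<le> cover_excess G X Y (insert a F) + cover_excess G X Y (T - {a})"
        using cover_excess_submodular[of "insert a F" "T - {a}"]
          admissible_subset[OF T] insert.prems by (metis Diff_subset)
      moreover have "cover_excess G X Y (T - {a}) < cover_excess G X Y T"
        using critical insert.prems by blast
      moreover have "card F \<le> cover_excess G X Y F" using insert.IH insert.prems by blast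
      ultimately show ?case using insert.hyps by simp
    qed
  qed
  then show ?thesis by blast
qed

lemma exists_critical_subset:
  assumes S: "admissible G X Y S"
  obtains T where "T \<subseteq> S" "cover_excess G X Y T = cover_excess G X Y S"
    "\<forall>t\<in>T. cover_excess G X Y (T - {t}) < cover_excess G X Y T"
proof -
  obtain T where T: "T \<subseteq> S" "cover_excess G X Y T = cover_excess G X Y S"
    and least: "\<And>T'. T' \<subseteq> S \<Longrightarrow> cover_excess G X Y T' = cover_excess G X Y S
      \<Longrightarrow> card T \<le> card T'"
    using ex_has_least_nat[of "\<lambda>T. T \<subseteq> S \<and> cover_excess G X Y T = cover_excess G X Y S" S card]
    by auto
  have "finite T" using finite_admissible admissible_subset S T(1) by blast
  have "cover_excess G X Y (T - {t}) < cover_excess G X Y T" if t: "t \<in> T" for t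
  proof -
    have "card (T - {t}) < card T" using card_Diff1_less[OF \<open>finite T\<close> t] .
    then have "cover_excess G X Y (T - {t}) \<noteq> cover_excess G X Y T"
      using least[of "T - {t}"] T by fastforce
    moreover have "cover_excess G X Y (T - {t}) \<le> cover_excess G X Y T"
      using cover_excess_mono admissible_subset[OF S T(1)] by blast
    ultimately show ?thesis by simp
  qed
  then show ?thesis using that T by blast
qed

lemma important_critical_witness:
  assumes imp: "important G X Y K" and ne: "K \<noteq> nbh G X"
  obtains T where "T \<subseteq> nbh G X - K" "T \<noteq> {}" "admissible G X Y T"
    "card T \<le> cover_excess G X Y T"
    "NR G Y (KW G X Y T) \<subseteq> NR G Y K" "nbh G X \<inter> KW G X Y T \<subseteq> K"
proof -
  have min: "min_separator G X Y K" using imp unfolding important_def by blast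
  then have K: "separator G X Y K" unfolding min_separator_def by blast
  let ?S = "nbh G X - K"
  have S: "admissible G X Y ?S" using admissible_nbh_diff_separator[OF K] .
  have "?S \<noteq> {}"
    using min ne separator_nbh_X unfolding min_separator_def by blast
  then have pos: "0 < cover_excess G X Y ?S" using cover_excess_pos[OF S] by blast
  obtain T where T: "T \<subseteq> ?S" "cover_excess G X Y T = cover_excess G X Y ?S"
    and critical: "\<forall>t\<in>T. cover_excess G X Y (T - {t}) < cover_excess G X Y T"
    using exists_critical_subset[OF S] by blast
  have adm: "admissible G X Y T" using admissible_subset[OF S T(1)] .
  have KT: "witness G X Y T (KW G X Y T)" "important G X Y (KW G X Y T)"
    using KW_witness_important[OF adm] by auto
  have "T \<noteq> {}" using T(2) pos cover_excess_empty by auto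
  moreover have "NR G Y (KW G X Y T) \<subseteq> NR G Y K"
    using witness_NR_subset_important[OF adm KT(1) imp] T(1) nbh_diff_subset_NR[OF K] by blast
  moreover have "?S \<inter> KW G X Y T = {}"
  proof -
    obtain K' where K': "witness G X Y ?S K'" using witness_exists[OF S] .
    then have "witness G X Y T K'" using T unfolding witness_iff by auto
    moreover have "T \<subseteq> NR G Y (KW G X Y T)"
      using admissible_subset_NR[OF adm] KT(1) unfolding witness_def by blast
    ultimately have "NR G Y K' \<subseteq> NR G Y (KW G X Y T)"
      using witness_NR_subset_important[OF adm _ KT(2)] by blast
    moreover have "?S \<subseteq> NR G Y K'"
      using admissible_subset_NR[OF S] K' unfolding witness_def by blast
    ultimately show ?thesis using NR_disjoint[of "KW G X Y T"] by blast
  qed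
  ultimately show ?thesis
    using that T(1) adm card_le_cover_excess_if_critical[OF adm critical] by blast
qed

end

section \<open>Projection onto an important witness\<close>

lemma verts_Pr_subset: "verts (Pr G X Y K) \<subseteq> verts G"
  by (auto simp: Pr_def Let_def verts_def)

lemma cw_subset_verts: "cw G X Y Ss K \<Longrightarrow> A \<in> set Ss \<Longrightarrow> A \<subseteq> verts G"
proof (induction G X Y Ss K rule: cw.induct)
  case (3 G X Y S S' Ss K)
  then show ?case using verts_Pr_subset[of G X Y "KW G X Y S"] by (auto simp: admissible_def nbh_def)
qed (auto simp: admissible_def nbh_def)

locale projection = norm_graph +
  fixes S :: "'a set"
  assumes admissible: "admissible G X Y S" and S_nonempty: "S \<noteq> {}"
begin

abbreviation "KS \<equiv> KW G X Y S"
abbreviation "H \<equiv> Pr G X Y KS"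
abbreviation "Z \<equiv> NR G Y KS"
abbreviation "W \<equiv> verts G - (Z - X)"

lemma KS_important: "important G X Y KS"
  using KW_witness_important[OF admissible] by blast

lemma KS_separator: "separator G X Y KS"
  and KS_disjoint: "KS \<inter> S = {}"
  and card_KS: "card KS = sep_num G X Y + cover_excess G X Y S"
  using KW_witness_important(1)[OF admissible] unfolding witness_iff by auto

lemma KS_eq_nbh_Z: "KS = nbh G Z"
  using min_separator_eq_nbh_NR KS_important unfolding important_def by blast

lemma X_nonempty: "X \<noteq> {}"
  using admissible S_nonempty unfolding admissible_def nbh_def by blast

lemma S_subset_Z_diff_X: "S \<subseteq> Z - X"
  using admissible_subset_NR[OF admissible KS_separator KS_disjoint] admissible nbh_disjoint[of X]
  unfolding admissible_def by blast

lemma verts_H: "verts H = W"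
  by (simp add: Pr_def Let_def verts_def)

lemma edges_H: "edges H = edges G \<inter> (W \<times> W) \<union> X \<times> KS \<union> KS \<times> X"
  by (simp add: Pr_def Let_def verts_def edges_def)

lemma X_subset_W: "X \<subseteq> W" and Y_subset_W: "Y \<subseteq> W" and KS_subset_W: "KS \<subseteq> W"
  and X_KS_disjoint: "X \<inter> KS = {}"
  using X_verts Y_verts NR_disjoint_Y[of KS] separatorD[OF KS_separator] NR_disjoint[of KS]
  by blast+

sublocale H: sep_graph H X Y
proof
  have "irrefl (edges G)" using wf unfolding wf_graph_def by blast
  then show "wf_graph H"
    unfolding wf_graph_def verts_H edges_H irrefl_def sym_def
    using finite_verts X_subset_W KS_subset_W X_KS_disjoint edge_sym by auto
qed (use X_subset_W Y_subset_W X_Y_disjoint verts_H in auto)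

lemma nbh_H_X: "nbh H X = KS"
proof
  show "nbh H X \<subseteq> KS"
  proof
    fix u assume "u \<in> nbh H X"
    then obtain v where v: "v \<in> X" "(v, u) \<in> edges H" "u \<in> W" "u \<notin> X"
      using H.nbh_memD verts_H by blast
    show "u \<in> KS"
    proof (rule ccontr)
      assume "u \<notin> KS"
      then have "u \<in> nbh G X - KS"
        using v X_KS_disjoint nbh_memI unfolding edges_H by blast
      then show False using nbh_diff_subset_NR[OF KS_separator] v by blast
    qed
  qed
next
  show "KS \<subseteq> nbh H X"
    using X_nonempty X_KS_disjoint H.nbh_memI unfolding edges_H by blast
qed

text \<open>A path of G from X to Y leaving the region reachable from X in H must pass through
  Z, whose boundary KS is adjacent to X in H.\<close>

lemma separator_H_imp_separator:
  assumes sH: "separator H X Y K"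
  shows "separator G X Y K"
  unfolding separator_def
proof (intro conjI notI)
  show "K \<subseteq> verts G - (X \<union> Y)" using sH verts_H unfolding separator_def by auto
next
  assume "\<exists>x\<in>X. \<exists>y\<in>Y. path_avoid G K x y"
  then obtain x y where x: "x \<in> X" and y: "y \<in> Y" and xy: "path_avoid G K x y" by blast
  define R where "R = {v. \<exists>x\<in>X. path_avoid H K x v}"
  have KX: "K \<inter> X = {}" using H.separatorD[OF sH] by blast
  have "y \<in> R \<union> Z" using xy
  proof (rule path_avoid_closed)
    show "x \<in> R \<union> Z" using X_subset_NR[OF KS_separator] x by blast
  next
    fix u w assume uw: "(u, w) \<in> edges G" "u \<notin> K" "w \<notin> K" "w \<in> verts G" "u \<in> R \<union> Z"
    show "w \<in> R \<union> Z"
    proof (cases "w \<in> Z")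
      case False
      show ?thesis
      proof (cases "u \<in> Z")
        case True
        then have "w \<in> KS" using KS_eq_nbh_Z nbh_memI uw False by blast
        moreover obtain x0 where "x0 \<in> X" using X_nonempty by blast
        ultimately have "path_avoid H K x0 w"
          using H.path_avoid_edge X_subset_W verts_H KX uw(3) unfolding edges_H by blast
        then show ?thesis using \<open>x0 \<in> X\<close> unfolding R_def by blast
      next
        case u: False
        then obtain x1 where x1: "x1 \<in> X" "path_avoid H K x1 u" using uw unfolding R_def by blast
        then have "u \<in> W" using H.path_avoid_target verts_H by blast
        then have "(u, w) \<in> edges H" using uw False unfolding edges_H by blast
        then show ?thesis using H.path_avoid_step x1 uw(3) unfolding R_def by blast
      qed
    qed blast
  qed
  then have "y \<in> R" using NR_disjoint_Y y by blast
  then show False using sH y unfolding R_def separator_def by blast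
qed

lemma reach_H_from_Y_avoids_X_KS:
  assumes sH: "separator H X Y K" and y: "y \<in> Y" and yv: "path_avoid H K y v"
  shows "v \<notin> X \<union> KS"
proof
  assume "v \<in> X \<union> KS"
  moreover obtain x0 where "x0 \<in> X" using X_nonempty by blast
  moreover have "x0 \<notin> K" using H.separatorD[OF sH] \<open>x0 \<in> X\<close> by blast
  ultimately have "\<exists>x\<in>X. path_avoid H K x y"
    using H.path_avoid_step[OF yv, of x0] H.path_avoid_sym yv unfolding edges_H by blast
  then show False using sH y unfolding separator_def by blast
qed

lemma path_avoid_H_iff:
  assumes sH: "separator H X Y K" and y: "y \<in> Y"
  shows "path_avoid H K y v \<longleftrightarrow> path_avoid G K y v"
proof
  assume "path_avoid H K y v"
  then show "path_avoid G K y v"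
  proof (rule H.path_avoid_closed[where Q = "{v. path_avoid G K y v}", simplified])
    show "path_avoid G K y y" using path_avoid_refl Y_verts H.separatorD[OF sH] y by blast
  next
    fix u w assume uw: "path_avoid H K y u" "(u, w) \<in> edges H" "w \<notin> K" "path_avoid G K y u"
    have "u \<notin> X" "w \<notin> X"
      using reach_H_from_Y_avoids_X_KS[OF sH y] uw H.path_avoid_step by blast+
    then have "(u, w) \<in> edges G" using uw(2) unfolding edges_H by blast
    then show "path_avoid G K y w" using path_avoid_step uw(3,4) by blast
  qed
next
  assume "path_avoid G K y v"
  then show "path_avoid H K y v"
  proof (rule path_avoid_closed[where Q = "{v. path_avoid H K y v}", simplified])
    show "path_avoid H K y y"
      using H.path_avoid_refl Y_subset_W verts_H H.separatorD[OF sH] y by blast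
  next
    fix u w assume uw: "(u, w) \<in> edges G" "w \<notin> K" "w \<in> verts G" "path_avoid H K y u"
    have "u \<in> W" using H.path_avoid_target[OF uw(4)] verts_H by blast
    moreover have "u \<notin> X \<union> nbh G Z" using reach_H_from_Y_avoids_X_KS[OF sH y uw(4)] KS_eq_nbh_Z by blast
    ultimately have "w \<in> W" using uw nbh_memI[of w u Z] edge_sym by blast
    then have "(u, w) \<in> edges H" using uw(1) \<open>u \<in> W\<close> unfolding edges_H by blast
    then show "path_avoid H K y w" using H.path_avoid_step uw(2,4) by blast
  qed
qed

lemma NR_eq_NR_H_Un:
  assumes sH: "separator H X Y K"
  shows "NR G Y K = NR H Y K \<union> (Z - X)" "NR H Y K \<inter> (Z - X) = {}"
proof -
  show "NR H Y K \<inter> (Z - X) = {}" using H.NR_subset_verts verts_H by blast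
  have "K \<subseteq> W" using H.separatorD[OF sH] verts_H by auto
  moreover have "Z - X \<subseteq> NR G Y K"
  proof
    fix v assume v: "v \<in> Z - X"
    then have "\<not> path_avoid G K y v" if "y \<in> Y" for y
      using path_avoid_H_iff[OF sH that] H.path_avoid_target verts_H by blast
    then show "v \<in> NR G Y K" using v \<open>K \<subseteq> W\<close> NR_subset_verts unfolding NR_def by blast
  qed
  ultimately show "NR G Y K = NR H Y K \<union> (Z - X)"
    using path_avoid_H_iff[OF sH] verts_H unfolding NR_def by blast
qed

lemma separator_H_KS: "separator H X Y KS"
  using H.separator_nbh[of X] nbh_H_X separatorD[OF KS_separator] X_Y_disjoint by auto

lemma separator_H_disjoint_S: "separator H X Y K \<Longrightarrow> K \<inter> S = {}"
  using H.separatorD verts_H S_subset_Z_diff_X by blast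

lemma card_KS_le: "separator H X Y K \<Longrightarrow> card KS \<le> card K"
  using cover_excess_le[OF separator_H_imp_separator separator_H_disjoint_S] card_KS by simp

lemma separator_H_card_eq_KS:
  assumes sH: "separator H X Y K" and card: "card K = card KS"
  shows "K = KS"
proof -
  have sG: "separator G X Y K" using separator_H_imp_separator[OF sH] .
  have "witness G X Y S K"
    using sG separator_H_disjoint_S[OF sH] card card_KS unfolding witness_iff by simp
  then have "NR G Y K \<subseteq> Z"
    using witness_NR_subset_important[OF admissible _ KS_important] S_subset_Z_diff_X by blast
  then have "NR H Y K \<inter> KS = {}"
    using NR_eq_NR_H_Un(1)[OF sH] NR_disjoint[of KS] by blast
  moreover have "KS - K \<subseteq> NR H Y K"
    using reach_H_from_Y_avoids_X_KS[OF sH] KS_subset_W verts_H unfolding NR_def by blast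
  ultimately have "KS \<subseteq> K" by blast
  then show ?thesis using card_subset_eq[OF finite_separator[OF sG]] card by metis
qed

lemma sep_num_H: "sep_num H X Y = card KS"
  unfolding sep_num_def
  by (rule Least_equality) (use separator_H_KS card_KS_le in blast)+

lemma norm_graph_H: "norm_graph H X Y"
proof
  show "normalized H X Y"
    unfolding normalized_def
    using separator_H_KS nbh_H_X sep_num_H separator_H_card_eq_KS by simp
qed

lemma separator_H_if_Z_subset_NR:
  assumes K: "separator G X Y K" and Z: "Z \<subseteq> NR G Y K"
  shows "separator H X Y K"
  unfolding separator_def
proof (intro conjI notI)
  show "K \<subseteq> verts H - (X \<union> Y)" using separatorD[OF K] NR_disjoint[of K] Z verts_H by blast
next
  assume "\<exists>x\<in>X. \<exists>y\<in>Y. path_avoid H K x y"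
  then obtain x y where x: "x \<in> X" and y: "y \<in> Y" and xy: "path_avoid H K x y" by blast
  have KS: "KS \<subseteq> NR G Y K \<union> K"
    using KS_eq_nbh_Z Z nbh_NR_subset[of K] by (auto simp: nbh_def)
  have "y \<in> NR G Y K" using xy
  proof (rule H.path_avoid_closed)
    show "x \<in> NR G Y K" using X_subset_NR[OF K] x by blast
  next
    fix u w assume uw: "(u, w) \<in> edges H" "w \<notin> K" "u \<in> NR G Y K"
    then show "w \<in> NR G Y K"
      using nbh_memI[of u w] nbh_NR_subset[of K] X_subset_NR[OF K] KS unfolding edges_H by blast
  qed
  then show False using NR_disjoint_Y y by blast
qed

lemma important_H:
  assumes imp: "important G X Y K" and Z: "Z \<subseteq> NR G Y K"
  shows "important H X Y K"
proof -
  have min: "min_separator G X Y K" using imp unfolding important_def by blast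
  then have sH: "separator H X Y K"
    using separator_H_if_Z_subset_NR Z unfolding min_separator_def by blast
  have "min_separator H X Y K"
    using sH min separator_H_imp_separator unfolding min_separator_def by blast
  moreover have "\<not> sep_less H Y K K'" if K': "separator H X Y K'" "card K' \<le> card K" for K'
  proof
    assume "sep_less H Y K K'"
    then have "sep_less G Y K K'"
      using NR_eq_NR_H_Un[OF sH] NR_eq_NR_H_Un[OF K'(1)] unfolding sep_less_def sep_ge_def by blast
    then show False using imp separator_H_imp_separator[OF K'(1)] K'(2) unfolding important_def by blast
  qed
  ultimately show ?thesis unfolding important_def by blast
qed

lemma compound_witness_Cons:
  assumes cw: "compound_witness H X Y Ss K" and ne: "Ss \<noteq> []"
    and hd: "hd Ss \<inter> nbh G X = {}"
  shows "compound_witness G X Y (S # Ss) K"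
proof -
  obtain S' Ss' where Ss: "Ss = S' # Ss'" using ne by (cases Ss) auto
  have cwH: "cw H X Y Ss K" using cw unfolding compound_witness_def by blast
  have W: "A \<subseteq> W" if "A \<in> set Ss" for A using cw_subset_verts[OF cwH that] verts_H by simp
  have tl_KS: "\<Union> (set Ss') \<inter> KS = {}"
    using cwH nbh_H_X unfolding Ss by (cases Ss') auto
  have nbh_W: "nbh G X \<inter> W \<subseteq> KS"
  proof
    fix v assume v: "v \<in> nbh G X \<inter> W"
    then have "v \<notin> NR G Y KS" using nbh_disjoint[of X] by blast
    then show "v \<in> KS" using v nbh_diff_subset_NR[OF KS_separator] by blast
  qed
  have "A \<inter> nbh G X = {}" if "A \<in> set Ss'" for A
    using W[of A] that tl_KS nbh_W unfolding Ss by auto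
  then have "\<Union> (set Ss) \<inter> nbh G X = {}" using hd unfolding Ss by auto
  then have "cw G X Y (S # Ss) K" using normalized admissible cwH unfolding Ss by simp
  moreover have "\<forall>i<length (S # Ss). \<forall>j<length (S # Ss). i \<noteq> j \<longrightarrow> (S # Ss) ! i \<inter> (S # Ss) ! j = {}"
  proof (rule disjoint_nth_Cons)
    show "\<forall>A\<in>set Ss. S \<inter> A = {}" using W S_subset_Z_diff_X by blast
    show "\<forall>i<length Ss. \<forall>j<length Ss. i \<noteq> j \<longrightarrow> Ss ! i \<inter> Ss ! j = {}"
      using cw unfolding compound_witness_def by blast
  qed
  moreover have "\<forall>i<length (S # Ss). (S # Ss) ! i \<noteq> {}"
    using cw S_nonempty nonempty_nth_iff[of Ss] nonempty_nth_iff[of "S # Ss"]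
    unfolding compound_witness_def by simp
  ultimately show ?thesis unfolding compound_witness_def by blast
qed

end

lemma important_compound_witness:
  assumes "norm_graph G X Y" "important G X Y K" "K \<noteq> nbh G X"
  shows "\<exists>Ss. compound_witness G X Y Ss K \<and> cw_rank Ss \<le> excess G X Y K \<and> Ss \<noteq> []
           \<and> hd Ss \<subseteq> nbh G X - K"
  using assms
proof (induction "excess G X Y K" arbitrary: G K rule: less_induct)
  case less
  interpret norm_graph G X Y by (rule less.prems(1))
  obtain T where T: "T \<subseteq> nbh G X - K" "T \<noteq> {}" "admissible G X Y T"
    "card T \<le> cover_excess G X Y T" "NR G Y (KW G X Y T) \<subseteq> NR G Y K"
    "nbh G X \<inter> KW G X Y T \<subseteq> K"
    using important_critical_witness[OF less.prems(2,3)] by blast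
  interpret P: projection G X Y T by unfold_locales (use T in blast)+
  have "K \<inter> T = {}" using T(1) by blast
  then have card_K: "sep_num G X Y + cover_excess G X Y T \<le> card K"
    using cover_excess_le less.prems(2) unfolding important_def min_separator_def by blast
  show ?case
  proof (cases "K = P.KS")
    case True
    then have "compound_witness G X Y [T] K"
      using normalized T(2,3) unfolding compound_witness_def by simp
    moreover have "cw_rank [T] \<le> excess G X Y K"
      using T(4) P.card_KS True unfolding cw_rank_def excess_def by simp
    ultimately show ?thesis using T(1) by fastforce
  next
    case False
    have "excess P.H X Y K < excess G X Y K"
      using P.sep_num_H P.card_KS card_K cover_excess_pos[OF T(3,2)] unfolding excess_def by simp
    then obtain Ss where Ss: "compound_witness P.H X Y Ss K" "cw_rank Ss \<le> excess P.H X Y K"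
      "Ss \<noteq> []" "hd Ss \<subseteq> P.KS - K"
      using less.hyps[OF _ P.norm_graph_H P.important_H[OF less.prems(2) T(5)]] False P.nbh_H_X
      by metis
    then have "compound_witness G X Y (T # Ss) K"
      using P.compound_witness_Cons T(6) by blast
    moreover have "cw_rank (T # Ss) \<le> excess G X Y K"
      using Ss(2) T(4) P.sep_num_H P.card_KS card_K unfolding cw_rank_def excess_def by simp
    ultimately show ?thesis using T(1) by fastforce
  qed
qed

theorem theorem2:
  fixes G :: "'a graph" and X Y K :: "'a set"
  assumes "wf_graph G"
    and "X \<subseteq> verts G" and "Y \<subseteq> verts G" and "X \<inter> Y = {}"
    and "normalized G X Y"
    and "important G X Y K"
    and "K \<noteq> nbh G X"
  shows "\<exists>Ss. compound_witness G X Y Ss K \<and> cw_rank Ss \<le> excess G X Y K"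
proof -
  have "norm_graph G X Y"
    using assms by (simp add: norm_graph_def norm_graph_axioms_def sep_graph_def)
  then show ?thesis using important_compound_witness assms(6,7) by blast
qed

end
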